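(* Let $G$ be a finite, simple, undirected graph of chromatic number $3$, and let $D$ be an orientation of $G$. Then there is a $3$-coloring $f$ of $G$ such that $D$ contains a directed full $f$-rainbow path, i.e. a directed path $v_1v_2v_3$ in $D$ (with arcs $(v_1,v_2)$ and $(v_2,v_3)$) whose three vertices receive three distinct colors under $f$.
   Context: A $3$-coloring of $G$ is a function $f:V(G)\to\{1,2,3\}$ with $f(u)\neq f(v)$ for every two adjacent vertices $u,v$. An orientation of $G$ is a digraph obtained by replacing each edge $uv$ by exactly one of the arcs $(u,v)$ or $(v,u)$. For a $k$-coloring $f$, a full $f$-rainbow path is a path of order $k$ whose vertices have pairwise distinct colors. *)

theory Defs
  imports Main
begin

definition simple_graph :: "'a set \<Rightarrow> ('a \<Rightarrow> 'a \<Rightarrow> bool) \<Rightarrow> bool" where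
  "simple_graph V E \<longleftrightarrow> finite V \<and> (\<forall>u v. E u v \<longrightarrow> u \<in> V \<and> v \<in> V)
     \<and> (\<forall>u v. E u v \<longrightarrow> E v u) \<and> (\<forall>v. \<not> E v v)"

definition proper_coloring :: "'a set \<Rightarrow> ('a \<Rightarrow> 'a \<Rightarrow> bool) \<Rightarrow> nat \<Rightarrow> ('a \<Rightarrow> nat) \<Rightarrow> bool" where
  "proper_coloring V E k f \<longleftrightarrow> (\<forall>v\<in>V. f v \<in> {1..k}) \<and> (\<forall>u v. E u v \<longrightarrow> f u \<noteq> f v)"

definition colorable :: "'a set \<Rightarrow> ('a \<Rightarrow> 'a \<Rightarrow> bool) \<Rightarrow> nat \<Rightarrow> bool" where
  "colorable V E k \<longleftrightarrow> (\<exists>f. proper_coloring V E k f)"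

definition chromatic_number :: "'a set \<Rightarrow> ('a \<Rightarrow> 'a \<Rightarrow> bool) \<Rightarrow> nat" where
  "chromatic_number V E = (LEAST k. colorable V E k)"

definition orientation :: "('a \<Rightarrow> 'a \<Rightarrow> bool) \<Rightarrow> ('a \<Rightarrow> 'a \<Rightarrow> bool) \<Rightarrow> bool" where
  "orientation E D \<longleftrightarrow> (\<forall>u v. D u v \<longrightarrow> E u v)
     \<and> (\<forall>u v. E u v \<longrightarrow> (D u v \<longleftrightarrow> \<not> D v u))"

definition has_full_rainbow_dipath3 :: "('a \<Rightarrow> 'a \<Rightarrow> bool) \<Rightarrow> ('a \<Rightarrow> nat) \<Rightarrow> bool" where
  "has_full_rainbow_dipath3 D f \<longleftrightarrow> (\<exists>v1 v2 v3. D v1 v2 \<and> D v2 v3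
     \<and> distinct [v1, v2, v3] \<and> distinct [f v1, f v2, f v3])"

end

theory Submission
  imports Defs
begin

text \<open>Call a vertex inner if it has both an in-arc and an out-arc. If no two inner vertices
  are adjacent, colouring sources 1, sinks 2 and inner vertices 3 is proper, and any inner
  vertex is the middle of a rainbow path from a source to a sink; there is an inner vertex
  since otherwise this colouring would use only two colours. If two inner vertices are
  adjacent, there is an arc p \<rightarrow> q \<rightarrow> r with p inner, and any proper 3-colouring either
  already gives a rainbow path or can be repaired by recolouring p: if its neighbourhood is
  bichromatic some path through p is rainbow, and if it is monochromatic p can be given the
  third colour, distinct from that of r.\<close>

definition inner_vertex :: "('a \<Rightarrow> 'a \<Rightarrow> bool) \<Rightarrow> 'a \<Rightarrow> bool" where
  "inner_vertex D v \<longleftrightarrow> (\<exists>u. D u v) \<and> (\<exists>w. D v w)"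

definition source_sink_coloring :: "('a \<Rightarrow> 'a \<Rightarrow> bool) \<Rightarrow> 'a \<Rightarrow> nat" where
  "source_sink_coloring D v =
     (if \<not> (\<exists>u. D u v) then 1 else if \<not> (\<exists>w. D v w) then 2 else 3)"

lemma orientation_arc_edge: "orientation E D \<Longrightarrow> D u v \<Longrightarrow> E u v"
  unfolding orientation_def by blast

lemma orientation_edge_arc: "orientation E D \<Longrightarrow> E u v \<Longrightarrow> D u v \<or> D v u"
  unfolding orientation_def by blast

lemma orientation_asym: "orientation E D \<Longrightarrow> D u v \<Longrightarrow> \<not> D v u"
  unfolding orientation_def by blast

lemma proper_coloring_edge: "proper_coloring V E k f \<Longrightarrow> E u v \<Longrightarrow> f u \<noteq> f v"
  unfolding proper_coloring_def by blast

lemma proper_coloring_arc: "proper_coloring V E k f \<Longrightarrow> orientation E D \<Longrightarrow> D u v \<Longrightarrow> f u \<noteq> f v"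
  using proper_coloring_edge orientation_arc_edge by metis

lemma rainbow_dipath3I:
  assumes "proper_coloring V E k f" "orientation E D" "D u v" "D v w" "f u \<noteq> f w"
  shows "has_full_rainbow_dipath3 D f"
proof -
  have "distinct [f u, f v, f w]" using assms proper_coloring_arc by fastforce
  then have "distinct [u, v, w]" by auto
  with \<open>distinct [f u, f v, f w]\<close> show ?thesis
    unfolding has_full_rainbow_dipath3_def using assms by blast
qed

lemma rainbow_dipath3_at_bichromatic_neighbours:
  assumes f: "proper_coloring V E k f" and o: "orientation E D"
    and "inner_vertex D p" and "E p a" "E p b" "f a \<noteq> f b"
  shows "has_full_rainbow_dipath3 D f"
proof -
  obtain x y where x: "D x p" and y: "D p y"
    using \<open>inner_vertex D p\<close> unfolding inner_vertex_def by blast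
  show ?thesis
  proof (cases "f x = f y")
    case False
    with rainbow_dipath3I[OF f o x y] show ?thesis .
  next
    case True
    obtain z where "E p z" "f z \<noteq> f y" using assms(4-6) by metis
    then consider "D z p" | "D p z" using orientation_edge_arc[OF o] by metis
    then show ?thesis
      by cases (use rainbow_dipath3I[OF f o _ y] rainbow_dipath3I[OF f o x] \<open>f z \<noteq> f y\<close> True in auto)
  qed
qed

lemma proper_coloring_recolor:
  assumes f: "proper_coloring V E k f" and "c \<in> {1..k}" and "\<And>z. E p z \<Longrightarrow> f z \<noteq> c"
    and "\<forall>u v. E u v \<longrightarrow> E v u"
  shows "proper_coloring V E k (f(p := c))"
  using assms unfolding proper_coloring_def by (metis fun_upd_apply)

lemma third_color: "\<exists>c\<in>{1..3::nat}. c \<noteq> a \<and> c \<noteq> b"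
  by (rule bexI[of _ "if 1 \<notin> {a, b} then 1 else if 2 \<notin> {a, b} then 2 else 3"]) auto

lemma rainbow_dipath3_through_inner_arc:
  assumes f: "proper_coloring V E 3 f" and o: "orientation E D"
    and sym: "\<forall>u v. E u v \<longrightarrow> E v u"
    and pq: "D p q" and "inner_vertex D p" "inner_vertex D q"
  shows "\<exists>g. proper_coloring V E 3 g \<and> has_full_rainbow_dipath3 D g"
proof -
  obtain r where qr: "D q r" using \<open>inner_vertex D q\<close> unfolding inner_vertex_def by blast
  have "r \<noteq> p" using orientation_asym[OF o pq] qr by blast
  consider "f p \<noteq> f r" | "\<exists>a b. E p a \<and> E p b \<and> f a \<noteq> f b"
    | "f p = f r" "\<And>z. E p z \<Longrightarrow> f z = f q"
    using orientation_arc_edge[OF o pq] by metis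
  then show ?thesis
  proof cases
    case 1
    then show ?thesis using f rainbow_dipath3I[OF f o pq qr] by blast
  next
    case 2
    then show ?thesis using f rainbow_dipath3_at_bichromatic_neighbours[OF f o \<open>inner_vertex D p\<close>] by blast
  next
    case 3
    obtain c where c: "c \<in> {1..3}" "c \<noteq> f p" "c \<noteq> f q" using third_color by blast
    let ?g = "f(p := c)"
    have g: "proper_coloring V E 3 ?g"
      using proper_coloring_recolor[OF f c(1) _ sym] 3(2) c(3) by metis
    have "?g p \<noteq> ?g r" using \<open>r \<noteq> p\<close> 3(1) c(2) by simp
    with g rainbow_dipath3I[OF g o pq qr] show ?thesis by blast
  qed
qed

lemma source_sink_coloring_arc:
  assumes o: "orientation E D"
    and indep: "\<And>p q. inner_vertex D p \<Longrightarrow> inner_vertex D q \<Longrightarrow> \<not> E p q"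
    and "D u v"
  shows "source_sink_coloring D u \<noteq> source_sink_coloring D v"
proof -
  have "\<not> (inner_vertex D u \<and> inner_vertex D v)"
    using indep orientation_arc_edge[OF o \<open>D u v\<close>] by blast
  with \<open>D u v\<close> show ?thesis unfolding source_sink_coloring_def inner_vertex_def by auto
qed

lemma source_sink_coloring_proper:
  assumes o: "orientation E D"
    and indep: "\<And>p q. inner_vertex D p \<Longrightarrow> inner_vertex D q \<Longrightarrow> \<not> E p q"
  shows "proper_coloring V E 3 (source_sink_coloring D)"
  unfolding proper_coloring_def
proof (intro conjI ballI allI impI)
  fix v show "source_sink_coloring D v \<in> {1..3}" unfolding source_sink_coloring_def by simp
next
  fix u v assume "E u v"
  then show "source_sink_coloring D u \<noteq> source_sink_coloring D v"
    using orientation_edge_arc[OF o] source_sink_coloring_arc[OF o indep] by metis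
qed

lemma source_sink_coloring_two_colors:
  assumes "proper_coloring V E 3 (source_sink_coloring D)" and "\<And>v. \<not> inner_vertex D v"
  shows "proper_coloring V E 2 (source_sink_coloring D)"
  using assms unfolding proper_coloring_def source_sink_coloring_def inner_vertex_def by auto

lemma source_sink_coloring_rainbow:
  assumes o: "orientation E D"
    and indep: "\<And>p q. inner_vertex D p \<Longrightarrow> inner_vertex D q \<Longrightarrow> \<not> E p q"
    and "inner_vertex D p"
  shows "has_full_rainbow_dipath3 D (source_sink_coloring D)"
proof -
  obtain x y where x: "D x p" and y: "D p y"
    using \<open>inner_vertex D p\<close> unfolding inner_vertex_def by blast
  have "\<not> inner_vertex D x" "\<not> inner_vertex D y"
    using indep \<open>inner_vertex D p\<close> orientation_arc_edge[OF o] x y by blast+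
  then have "source_sink_coloring D x = 1" "source_sink_coloring D y = 2"
    using x y unfolding source_sink_coloring_def inner_vertex_def by auto
  then show ?thesis
    using rainbow_dipath3I[OF source_sink_coloring_proper[OF o indep] o x y] by simp
qed

lemma colorable_card: "simple_graph V E \<Longrightarrow> colorable V E (card V)"
proof -
  assume G: "simple_graph V E"
  then have "finite V" unfolding simple_graph_def by blast
  then obtain h where h: "bij_betw h V {0..<card V}" using ex_bij_betw_finite_nat by blast
  have "proper_coloring V E (card V) (\<lambda>v. Suc (h v))"
    unfolding proper_coloring_def
  proof (intro conjI ballI allI impI)
    fix v assume "v \<in> V"
    then have "h v < card V" using h unfolding bij_betw_def by auto
    then show "Suc (h v) \<in> {1..card V}" by simp
  next
    fix u v assume "E u v"
    with G have "u \<in> V" "v \<in> V" "u \<noteq> v" unfolding simple_graph_def by blast+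
    then show "Suc (h u) \<noteq> Suc (h v)" using h by (auto simp: bij_betw_def inj_on_def)
  qed
  then show ?thesis unfolding colorable_def by blast
qed

lemma colorable_chromatic_number: "simple_graph V E \<Longrightarrow> colorable V E (chromatic_number V E)"
  unfolding chromatic_number_def using colorable_card by (rule LeastI)

lemma not_colorable_below_chromatic_number:
  "k < chromatic_number V E \<Longrightarrow> \<not> colorable V E k"
  unfolding chromatic_number_def by (rule not_less_Least)

theorem theorem4:
  fixes V :: "'a set" and E D :: "'a \<Rightarrow> 'a \<Rightarrow> bool"
  assumes "simple_graph V E"
    and "chromatic_number V E = 3"
    and "orientation E D"
  shows "\<exists>f. proper_coloring V E 3 f \<and> has_full_rainbow_dipath3 D f"
proof (cases "\<exists>p q. inner_vertex D p \<and> inner_vertex D q \<and> E p q")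
  case True
  then obtain p q where "inner_vertex D p" "inner_vertex D q" "D p q"
    using orientation_edge_arc[OF assms(3)] by blast
  moreover obtain f where "proper_coloring V E 3 f"
    using colorable_chromatic_number[OF assms(1)] assms(2) unfolding colorable_def by auto
  moreover have "\<forall>u v. E u v \<longrightarrow> E v u" using assms(1) unfolding simple_graph_def by blast
  ultimately show ?thesis using rainbow_dipath3_through_inner_arc[OF _ assms(3)] by blast
next
  case False
  then have indep: "\<And>p q. inner_vertex D p \<Longrightarrow> inner_vertex D q \<Longrightarrow> \<not> E p q" by blast
  note proper = source_sink_coloring_proper[OF assms(3) indep]
  have "\<not> colorable V E 2" using not_colorable_below_chromatic_number[of 2 V E] assms(2) by simp
  then obtain p where "inner_vertex D p"
    using source_sink_coloring_two_colors[OF proper] unfolding colorable_def by blast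
  then show ?thesis using proper source_sink_coloring_rainbow[OF assms(3) indep] by blast
qed

end
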